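(* Let $(V,\nu)$ be a gauged space. Then there exist a compact Hausdorff space $X$ and a linear map $\phi:V\to C_{\mathbb{R}}(X)$ such that $\nu(x)=d_{C_{\mathbb{R}}(X)}(\phi(x))$ for all $x\in V$. Consequently $\phi$ is isometric from $(V,\|\cdot\|_\nu)$ into $C_{\mathbb{R}}(X)$ with the supremum norm, and $\phi$ is an order embedding of $(V,V_{+,\nu})$ into $(C_{\mathbb{R}}(X),C_{\mathbb{R}}(X)_+)$.
   Context: $C_{\mathbb{R}}(X)$ denotes the continuous real-valued functions on $X$, with the supremum norm and cone $C_{\mathbb{R}}(X)_+$ of pointwise nonnegative functions. A gauge on a real vector space $V$ is a map $\nu:V\to[0,\infty)$ with $\nu(x+y)\le\nu(x)+\nu(y)$ and $\nu(tx)=t\nu(x)$ for all $x,y\in V$, $t>0$; its conjugate is $\overline{\nu}(x)=\nu(-x)$. A gauge is proper if for every $x\neq0$, $\nu(x)\neq0$ or $\overline{\nu}(x)\neq0$; a gauged space is a pair $(V,\nu)$ with $\nu$ a proper gauge. The induced norm is $\|x\|_\nu=\max\{\nu(x),\overline{\nu}(x)\}$ and the induced cone is $V_{+,\nu}=\ker\overline{\nu}$. For a normed ordered vector space $(W,\|\cdot\|,W_+)$, $d_W(y)=\inf\{\|y+p\|:p\in W_+\}$. An order embedding is an injective linear map $\phi$ with $\phi(x)\ge0$ iff $x\ge0$. *)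

theory Defs
  imports "HOL-Analysis.Analysis"
begin

definition gauge :: "('v::real_vector \<Rightarrow> real) \<Rightarrow> bool" where
  "gauge \<nu> \<longleftrightarrow> (\<forall>x. 0 \<le> \<nu> x) \<and> (\<forall>x y. \<nu> (x + y) \<le> \<nu> x + \<nu> y)
     \<and> (\<forall>x t. t > 0 \<longrightarrow> \<nu> (t *\<^sub>R x) = t * \<nu> x)"

definition conj_gauge :: "('v::real_vector \<Rightarrow> real) \<Rightarrow> 'v \<Rightarrow> real" where
  "conj_gauge \<nu> x = \<nu> (- x)"

definition proper_gauge :: "('v::real_vector \<Rightarrow> real) \<Rightarrow> bool" where
  "proper_gauge \<nu> \<longleftrightarrow> gauge \<nu> \<and> (\<forall>x. x \<noteq> 0 \<longrightarrow> \<nu> x \<noteq> 0 \<or> conj_gauge \<nu> x \<noteq> 0)"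

definition gauge_norm :: "('v::real_vector \<Rightarrow> real) \<Rightarrow> 'v \<Rightarrow> real" where
  "gauge_norm \<nu> x = max (\<nu> x) (conj_gauge \<nu> x)"

definition gauge_cone :: "('v::real_vector \<Rightarrow> real) \<Rightarrow> 'v set" where
  "gauge_cone \<nu> = {x. conj_gauge \<nu> x = 0}"

text \<open>$C_\mathbb{R}(X)$ for a topological space X, with elements represented as
  functions vanishing outside the carrier (extensional convention).\<close>
definition CR :: "'a topology \<Rightarrow> ('a \<Rightarrow> real) set" where
  "CR X = {f. continuous_map X euclideanreal f \<and> (\<forall>t. t \<notin> topspace X \<longrightarrow> f t = 0)}"

definition CR_pos :: "'a topology \<Rightarrow> ('a \<Rightarrow> real) set" where
  "CR_pos X = {f \<in> CR X. \<forall>t\<in>topspace X. 0 \<le> f t}"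

definition supnorm :: "'a topology \<Rightarrow> ('a \<Rightarrow> real) \<Rightarrow> real" where
  "supnorm X f = (if topspace X = {} then 0 else Sup ((\<lambda>t. \<bar>f t\<bar>) ` topspace X))"

definition dCR :: "'a topology \<Rightarrow> ('a \<Rightarrow> real) \<Rightarrow> real" where
  "dCR X y = Inf ((\<lambda>p. supnorm X (\<lambda>t. y t + p t)) ` CR_pos X)"

definition linear_into_CR :: "'a topology \<Rightarrow> ('v::real_vector \<Rightarrow> 'a \<Rightarrow> real) \<Rightarrow> bool" where
  "linear_into_CR X \<phi> \<longleftrightarrow> (\<forall>x. \<phi> x \<in> CR X)
     \<and> (\<forall>x y. \<phi> (x + y) = (\<lambda>t. \<phi> x t + \<phi> y t))
     \<and> (\<forall>c x. \<phi> (c *\<^sub>R x) = (\<lambda>t. c * \<phi> x t))"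

end

theory Submission
  imports Defs
begin

(*
  A gauge is sublinear, so by the Hahn--Banach theorem (obtained here from Zorn's lemma: a
  minimal sublinear functional below \<nu> is linear) every value \<nu> x is attained by a linear
  functional f \<le> \<nu>.  The linear functionals dominated by \<nu> form a compact Hausdorff space K
  in the topology of pointwise convergence, and x is represented by the evaluation f \<mapsto> f x
  on K, whose maximum is \<nu> x and whose minimum is -\<nu> (-x).  Cutting off the negative part
  shows \<nu> x = d(\<phi> x); the supremum norm is max (\<nu> x) (\<nu> (-x)); \<phi> x is nonnegative iff
  \<nu> (-x) = 0; and properness makes \<phi> injective.
*)

definition sublinear :: "('v::real_vector \<Rightarrow> real) \<Rightarrow> bool" where
  "sublinear q \<longleftrightarrow>
     (\<forall>x y. q (x + y) \<le> q x + q y) \<and> (\<forall>x t. t > 0 \<longrightarrow> q (t *\<^sub>R x) = t * q x)"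

lemma sublinear_add_le: "sublinear q \<Longrightarrow> q (x + y) \<le> q x + q y"
  unfolding sublinear_def by blast

lemma sublinear_scaleR: "sublinear q \<Longrightarrow> t > 0 \<Longrightarrow> q (t *\<^sub>R x) = t * q x"
  unfolding sublinear_def by blast

lemma sublinear_zero: "sublinear q \<Longrightarrow> q 0 = 0"
  using sublinear_scaleR[of q 2 0] by simp

lemma sublinear_scaleR_nonneg: "sublinear q \<Longrightarrow> t \<ge> 0 \<Longrightarrow> q (t *\<^sub>R x) = t * q x"
  by (cases "t = 0") (simp_all add: sublinear_zero sublinear_scaleR)

lemma sublinear_neg_le: "sublinear q \<Longrightarrow> - q (- x) \<le> q x"
  using sublinear_add_le[of q x "- x"] sublinear_zero[of q] by simp

lemma sublinearI:
  fixes q :: "'v::real_vector \<Rightarrow> real"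
  assumes add: "\<And>x y. q (x + y) \<le> q x + q y"
    and scale: "\<And>s x. s > 0 \<Longrightarrow> q (s *\<^sub>R x) \<le> s * q x"
  shows "sublinear q"
  unfolding sublinear_def
proof (intro conjI allI impI add)
  fix x and t :: real
  assume t: "t > 0"
  have "q x = q ((1 / t) *\<^sub>R (t *\<^sub>R x))" using t by simp
  also have "\<dots> \<le> (1 / t) * q (t *\<^sub>R x)" using scale[of "1 / t" "t *\<^sub>R x"] t by simp
  finally have "t * q x \<le> q (t *\<^sub>R x)" using t by (simp add: field_simps)
  with scale[OF t, of x] show "q (t *\<^sub>R x) = t * q x" by simp
qed

lemma linear_if_sublinear_odd:
  fixes q :: "'v::real_vector \<Rightarrow> real"
  assumes q: "sublinear q" and odd: "\<And>y. q (- y) = - q y"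
  shows "linear q"
proof (rule linearI)
  fix x y
  have "q (x + y + - y) \<le> q (x + y) + q (- y)" by (rule sublinear_add_le[OF q])
  with odd[of y] sublinear_add_le[OF q, of x y] show "q (x + y) = q x + q y" by simp
next
  fix c x
  show "q (c *\<^sub>R x) = c *\<^sub>R q x"
  proof (cases "c \<ge> 0")
    case True then show ?thesis by (simp add: sublinear_scaleR_nonneg[OF q])
  next
    case False
    have "q (c *\<^sub>R x) = q (- ((- c) *\<^sub>R x))" by simp
    also have "\<dots> = - q ((- c) *\<^sub>R x)" by (rule odd)
    also have "\<dots> = - ((- c) * q x)" using False by (subst sublinear_scaleR_nonneg[OF q]) auto
    finally show ?thesis by simp
  qed
qed

text \<open>The reduction \<open>q\<^sub>y\<close> of \<open>q\<close> along \<open>y\<close> is sublinear, at most \<open>q\<close>, and satisfies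
  \<open>q\<^sub>y (- y) \<le> - q y\<close>; hence a minimal sublinear functional is odd, and every linear functional
  below \<open>q\<^sub>y\<close> agrees with \<open>q\<close> at \<open>y\<close>.\<close>

definition sublinear_reduct :: "('v::real_vector \<Rightarrow> real) \<Rightarrow> 'v \<Rightarrow> 'v \<Rightarrow> real" where
  "sublinear_reduct q y x = (INF t\<in>{0..}. q (x + t *\<^sub>R y) - t * q y)"

lemma bdd_below_sublinear_reduct:
  assumes q: "sublinear q"
  shows "bdd_below ((\<lambda>t. q (x + t *\<^sub>R y) - t * q y) ` {0..})"
proof (rule bdd_belowI2)
  fix t :: real
  assume "t \<in> {0..}"
  then have "q (t *\<^sub>R y) = t * q y" by (simp add: sublinear_scaleR_nonneg[OF q])
  moreover have "q ((x + t *\<^sub>R y) + - x) \<le> q (x + t *\<^sub>R y) + q (- x)"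
    by (rule sublinear_add_le[OF q])
  ultimately show "- q (- x) \<le> q (x + t *\<^sub>R y) - t * q y" by simp
qed

lemma sublinear_reduct_le:
  "sublinear q \<Longrightarrow> t \<ge> 0 \<Longrightarrow> sublinear_reduct q y x \<le> q (x + t *\<^sub>R y) - t * q y"
  unfolding sublinear_reduct_def by (rule cInf_lower) (auto intro: bdd_below_sublinear_reduct)

lemma sublinear_reduct_greatest:
  "(\<And>t. t \<ge> 0 \<Longrightarrow> a \<le> q (x + t *\<^sub>R y) - t * q y) \<Longrightarrow> a \<le> sublinear_reduct q y x"
  unfolding sublinear_reduct_def by (rule cInf_greatest) auto

lemma sublinear_reduct_le_self: "sublinear q \<Longrightarrow> sublinear_reduct q y \<le> q"
  using sublinear_reduct_le[of q 0] by (simp add: le_fun_def)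

lemma sublinear_reduct_neg: "sublinear q \<Longrightarrow> sublinear_reduct q y (- y) \<le> - q y"
  using sublinear_reduct_le[of q 1 y "- y"] sublinear_zero[of q] by simp

lemma sublinear_sublinear_reduct:
  assumes q: "sublinear q"
  shows "sublinear (sublinear_reduct q y)"
proof (rule sublinearI)
  let ?r = "sublinear_reduct q y"
  fix x1 x2
  have split: "?r (x1 + x2) \<le> (q (x1 + t1 *\<^sub>R y) - t1 * q y) + (q (x2 + t2 *\<^sub>R y) - t2 * q y)"
    if "t1 \<ge> 0" "t2 \<ge> 0" for t1 t2
  proof -
    have "?r (x1 + x2) \<le> q ((x1 + t1 *\<^sub>R y) + (x2 + t2 *\<^sub>R y)) - (t1 + t2) * q y"
      using sublinear_reduct_le[OF q, of "t1 + t2" y "x1 + x2"] that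
      by (simp add: algebra_simps)
    also have "\<dots> \<le> q (x1 + t1 *\<^sub>R y) + q (x2 + t2 *\<^sub>R y) - (t1 + t2) * q y"
      using sublinear_add_le[OF q] by simp
    finally show ?thesis by (simp add: algebra_simps)
  qed
  have "?r (x1 + x2) - ?r x1 \<le> q (x2 + t2 *\<^sub>R y) - t2 * q y" if "t2 \<ge> 0" for t2
  proof -
    have "?r (x1 + x2) - (q (x2 + t2 *\<^sub>R y) - t2 * q y) \<le> ?r x1"
      by (rule sublinear_reduct_greatest) (use split that in fastforce)
    then show ?thesis by simp
  qed
  then have "?r (x1 + x2) - ?r x1 \<le> ?r x2" by (rule sublinear_reduct_greatest)
  then show "?r (x1 + x2) \<le> ?r x1 + ?r x2" by simp
next
  let ?r = "sublinear_reduct q y"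
  fix s :: real and x
  assume s: "s > 0"
  have "?r (s *\<^sub>R x) / s \<le> q (x + t *\<^sub>R y) - t * q y" if "t \<ge> 0" for t
  proof -
    have "?r (s *\<^sub>R x) \<le> q (s *\<^sub>R x + (s * t) *\<^sub>R y) - (s * t) * q y"
      using sublinear_reduct_le[OF q, of "s * t" y "s *\<^sub>R x"] s that by simp
    also have "s *\<^sub>R x + (s * t) *\<^sub>R y = s *\<^sub>R (x + t *\<^sub>R y)" by (simp add: algebra_simps)
    also have "q (s *\<^sub>R (x + t *\<^sub>R y)) = s * q (x + t *\<^sub>R y)" by (rule sublinear_scaleR[OF q s])
    finally show ?thesis using s by (simp add: field_simps)
  qed
  then have "?r (s *\<^sub>R x) / s \<le> ?r x" by (rule sublinear_reduct_greatest)
  then show "?r (s *\<^sub>R x) \<le> s * ?r x" using s by (simp add: field_simps)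
qed

lemma bdd_below_sublinear_family:
  assumes "\<And>q. q \<in> C \<Longrightarrow> sublinear q \<and> q \<le> p"
  shows "bdd_below ((\<lambda>q. q x) ` C)"
proof (rule bdd_belowI2)
  fix q assume "q \<in> C"
  with assms[of q] show "- p (- x) \<le> q x"
    using sublinear_neg_le[of q x] le_funD[of q p "- x"] by linarith
qed

lemma sublinear_chain_Inf:
  fixes C :: "('v::real_vector \<Rightarrow> real) set"
  assumes "C \<noteq> {}"
    and sub: "\<And>q. q \<in> C \<Longrightarrow> sublinear q \<and> q \<le> p"
    and chain: "\<And>a b. a \<in> C \<Longrightarrow> b \<in> C \<Longrightarrow> a \<le> b \<or> b \<le> a"
  shows "sublinear (\<lambda>x. INF q\<in>C. q x)"
proof -
  define u where "u = (\<lambda>x. INF q\<in>C. q x)"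
  have lower: "q \<in> C \<Longrightarrow> u x \<le> q x" for q x
    unfolding u_def by (rule cInf_lower) (use bdd_below_sublinear_family[OF sub] in auto)
  have greatest: "(\<And>q. q \<in> C \<Longrightarrow> a \<le> q x) \<Longrightarrow> a \<le> u x" for a x
    unfolding u_def by (rule cInf_greatest) (use assms(1) in auto)
  have "sublinear u"
  proof (rule sublinearI)
    fix x y
    have via: "u (x + y) \<le> q x + q y" if "q \<in> C" for q
      using lower[OF that, of "x + y"] sublinear_add_le[of q x y] sub[OF that] by linarith
    have split: "u (x + y) \<le> q1 x + q2 y" if "q1 \<in> C" "q2 \<in> C" for q1 q2
    proof (cases "q1 \<le> q2")
      case True
      then show ?thesis using via[OF that(1)] le_funD[OF True, of y] by linarith
    next
      case False
      then have "q2 \<le> q1" using chain that by blast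
      then show ?thesis using via[OF that(2)] le_funD[of q2 q1 x] by linarith
    qed
    have "u (x + y) - u x \<le> q2 y" if "q2 \<in> C" for q2
    proof -
      have "u (x + y) - q2 y \<le> u x" by (rule greatest) (use split that in fastforce)
      then show ?thesis by simp
    qed
    then have "u (x + y) - u x \<le> u y" by (rule greatest)
    then show "u (x + y) \<le> u x + u y" by simp
  next
    fix s :: real and x
    assume s: "s > 0"
    have "u (s *\<^sub>R x) / s \<le> q x" if "q \<in> C" for q
      using lower[OF that, of "s *\<^sub>R x"] sublinear_scaleR[of q s x] sub[OF that] s
      by (simp add: field_simps)
    then have "u (s *\<^sub>R x) / s \<le> u x" by (rule greatest)
    then show "u (s *\<^sub>R x) \<le> s * u x" using s by (simp add: field_simps)
  qed
  then show ?thesis by (simp add: u_def)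
qed

lemma exists_minimal_sublinear_below:
  fixes p :: "'v::real_vector \<Rightarrow> real"
  assumes "sublinear p"
  shows "\<exists>m. sublinear m \<and> m \<le> p \<and> (\<forall>a. sublinear a \<longrightarrow> a \<le> m \<longrightarrow> a = m)"
proof -
  let ?A = "{q. sublinear q \<and> q \<le> p}"
  have "\<exists>m\<in>?A. \<forall>a\<in>?A. m \<ge> a \<longrightarrow> a = m"
  proof (rule predicate_Zorn)
    show "partial_order_on ?A (relation_of (\<ge>) ?A)"
      by (rule partial_order_on_relation_ofI) (auto intro: order_trans antisym)
  next
    fix C
    assume "C \<in> Chains (relation_of (\<ge>) ?A)"
    then have CA: "\<And>q. q \<in> C \<Longrightarrow> sublinear q \<and> q \<le> p"
      and chain: "\<And>a b. a \<in> C \<Longrightarrow> b \<in> C \<Longrightarrow> a \<le> b \<or> b \<le> a"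
      unfolding Chains_def relation_of_def by blast+
    show "\<exists>u\<in>?A. \<forall>q\<in>C. q \<ge> u"
    proof (cases "C = {}")
      case True
      then show ?thesis using assms by blast
    next
      case False
      let ?u = "\<lambda>x. INF q\<in>C. q x"
      have lower: "?u \<le> q" if "q \<in> C" for q
        using that bdd_below_sublinear_family[OF CA] by (auto simp: le_fun_def intro: cInf_lower)
      obtain q0 where q0: "q0 \<in> C" using False by blast
      have "?u \<le> p" using order_trans[OF lower[OF q0]] CA[OF q0] by blast
      moreover have "sublinear ?u" by (rule sublinear_chain_Inf[OF False CA chain])
      ultimately show ?thesis using lower by blast
    qed
  qed
  then obtain m where m: "sublinear m" "m \<le> p"
    and minimal: "\<And>a. sublinear a \<Longrightarrow> a \<le> p \<Longrightarrow> a \<le> m \<Longrightarrow> a = m"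
    by auto
  have "a = m" if "sublinear a" "a \<le> m" for a
    using minimal[OF that(1) order_trans[OF that(2) m(2)] that(2)] .
  with m show ?thesis by blast
qed

lemma linear_if_minimal_sublinear:
  fixes m :: "'v::real_vector \<Rightarrow> real"
  assumes m: "sublinear m" and minimal: "\<And>a. sublinear a \<Longrightarrow> a \<le> m \<Longrightarrow> a = m"
  shows "linear m"
proof (rule linear_if_sublinear_odd[OF m])
  fix y
  have "sublinear_reduct m y = m"
    by (rule minimal) (simp_all add: sublinear_sublinear_reduct sublinear_reduct_le_self m)
  then have "m (- y) \<le> - m y" using sublinear_reduct_neg[OF m, of y] by simp
  with sublinear_neg_le[OF m, of "- y"] show "m (- y) = - m y" by simp
qed

lemma exists_linear_below_sublinear:
  fixes p :: "'v::real_vector \<Rightarrow> real"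
  assumes "sublinear p"
  shows "\<exists>f. linear f \<and> f \<le> p"
  using exists_minimal_sublinear_below[OF assms] linear_if_minimal_sublinear by blast

lemma sublinear_exists_linear_support:
  fixes p :: "'v::real_vector \<Rightarrow> real"
  assumes p: "sublinear p"
  shows "\<exists>f. linear f \<and> f \<le> p \<and> f y = p y"
proof -
  obtain f where f: "linear f" "f \<le> sublinear_reduct p y"
    using exists_linear_below_sublinear[OF sublinear_sublinear_reduct[OF p]] by blast
  have "f \<le> p" using f(2) sublinear_reduct_le_self[OF p] by (rule order_trans)
  moreover have "- f y \<le> - p y"
    using le_funD[OF f(2), of "- y"] sublinear_reduct_neg[OF p, of y] linear_neg[OF f(1), of y]
    by simp
  ultimately show ?thesis using f(1) le_funD[of f p y] by force
qed

lemma gauge_nonneg: "gauge \<nu> \<Longrightarrow> 0 \<le> \<nu> x"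
  unfolding gauge_def by blast

lemma sublinear_if_gauge: "gauge \<nu> \<Longrightarrow> sublinear \<nu>"
  unfolding gauge_def sublinear_def by blast

lemma abs_le_supnorm:
  assumes "compact_space X" "continuous_map X euclideanreal h" "t \<in> topspace X"
  shows "\<bar>h t\<bar> \<le> supnorm X h"
proof -
  have "compact (h ` topspace X)"
    using image_compactin[OF assms(1)[unfolded compact_space_def] assms(2)] by simp
  then obtain b where "\<forall>s\<in>h ` topspace X. norm s \<le> b"
    using compact_imp_bounded bounded_iff by blast
  then have "bdd_above ((\<lambda>t. \<bar>h t\<bar>) ` topspace X)" by (auto intro: bdd_aboveI[of _ b])
  with assms(3) show ?thesis unfolding supnorm_def by (auto intro: cSup_upper)
qed

text \<open>The representing space is the set of linear functionals dominated by \<open>\<nu>\<close>, with the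
  topology of pointwise convergence; as in the Banach--Alaoglu theorem it is compact because
  it is a closed subset of a product of compact intervals.\<close>

definition dominated_functionals :: "('v::real_vector \<Rightarrow> real) \<Rightarrow> ('v \<Rightarrow> real) set" where
  "dominated_functionals \<nu> = {f. linear f \<and> f \<le> \<nu>}"

definition dominated_topology :: "('v::real_vector \<Rightarrow> real) \<Rightarrow> ('v \<Rightarrow> real) topology" where
  "dominated_topology \<nu> =
     subtopology (product_topology (\<lambda>_. euclideanreal) UNIV) (dominated_functionals \<nu>)"

text \<open>Evaluation is set to \<open>0\<close> off the carrier to meet the extensional convention of \<open>CR\<close>.\<close>

definition evaluation :: "('v::real_vector \<Rightarrow> real) \<Rightarrow> 'v \<Rightarrow> ('v \<Rightarrow> real) \<Rightarrow> real" where
  "evaluation \<nu> x = (\<lambda>f. if f \<in> dominated_functionals \<nu> then f x else 0)"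

lemma topspace_dominated_topology [simp]:
  "topspace (dominated_topology \<nu>) = dominated_functionals \<nu>"
  by (simp add: dominated_topology_def)

lemma dominated_functional_bounds:
  assumes "f \<in> dominated_functionals \<nu>"
  shows "- \<nu> (- x) \<le> f x" and "f x \<le> \<nu> x"
proof -
  from assms have f: "linear f" "f \<le> \<nu>" by (simp_all add: dominated_functionals_def)
  show "f x \<le> \<nu> x" using le_funD[OF f(2)] .
  show "- \<nu> (- x) \<le> f x" using le_funD[OF f(2), of "- x"] linear_neg[OF f(1), of x] by simp
qed

lemma closedin_dominated_functionals:
  "closedin (product_topology (\<lambda>_. euclideanreal) UNIV) (dominated_functionals \<nu>)"
proof -
  let ?P = "product_topology (\<lambda>_::'a. euclideanreal) UNIV"
  have proj: "continuous_map ?P euclideanreal (\<lambda>f. f x)" for x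
    by (rule continuous_map_product_projection) simp
  have "dominated_functionals \<nu> =
      (\<Inter>(x, y). {f \<in> topspace ?P. f (x + y) = f x + f y})
      \<inter> (\<Inter>(c, x). {f \<in> topspace ?P. f (c *\<^sub>R x) = c * f x})
      \<inter> (\<Inter>x. {f \<in> topspace ?P. f x \<in> {..\<nu> x}})"
    by (auto simp: dominated_functionals_def linear_iff le_fun_def)
  moreover have "closedin ?P {f \<in> topspace ?P. f (x + y) = f x + f y}" for x y
    by (rule closedin_continuous_maps_eq[OF _ proj continuous_map_add[OF proj proj]]) simp
  moreover have "closedin ?P {f \<in> topspace ?P. f (c *\<^sub>R x) = c * f x}" for c x
    by (rule closedin_continuous_maps_eq[OF _ proj continuous_map_real_mult_left[OF proj]]) simp
  moreover have "closedin ?P {f \<in> topspace ?P. f x \<in> {..\<nu> x}}" for x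
    by (rule closedin_continuous_map_preimage[OF proj]) simp
  ultimately show ?thesis by (auto intro!: closedin_Int closedin_Inter)
qed

lemma compact_space_dominated_topology: "compact_space (dominated_topology \<nu>)"
  unfolding dominated_topology_def
proof (rule compact_space_subtopology[OF closed_compactin])
  show "compactin (product_topology (\<lambda>_. euclideanreal) UNIV) (PiE UNIV (\<lambda>x. {- \<nu> (- x)..\<nu> x}))"
    by (simp add: compactin_PiE)
  show "dominated_functionals \<nu> \<subseteq> PiE UNIV (\<lambda>x. {- \<nu> (- x)..\<nu> x})"
    using dominated_functional_bounds by auto
qed (rule closedin_dominated_functionals)

lemma Hausdorff_space_dominated_topology: "Hausdorff_space (dominated_topology \<nu>)"
  unfolding dominated_topology_def
  by (intro Hausdorff_space_subtopology) (simp add: Hausdorff_space_product_topology)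

lemma continuous_map_dominated_topology_eval:
  "continuous_map (dominated_topology \<nu>) euclideanreal (\<lambda>f. f x)"
  unfolding dominated_topology_def
  by (intro continuous_map_from_subtopology continuous_map_product_projection) simp

lemma evaluation_in_CR: "evaluation \<nu> x \<in> CR (dominated_topology \<nu>)"
  unfolding CR_def
proof (intro CollectI conjI allI impI)
  show "continuous_map (dominated_topology \<nu>) euclideanreal (evaluation \<nu> x)"
    by (rule continuous_map_eq[OF continuous_map_dominated_topology_eval])
       (simp add: evaluation_def)
qed (simp add: evaluation_def)

lemma linear_into_CR_evaluation: "linear_into_CR (dominated_topology \<nu>) (evaluation \<nu>)"
  unfolding linear_into_CR_def
proof (intro conjI allI evaluation_in_CR)
  show "evaluation \<nu> (x + y) = (\<lambda>f. evaluation \<nu> x f + evaluation \<nu> y f)" for x y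
    by (auto simp: evaluation_def dominated_functionals_def linear_add)
  show "evaluation \<nu> (c *\<^sub>R x) = (\<lambda>f. c * evaluation \<nu> x f)" for c x
    by (auto simp: evaluation_def dominated_functionals_def linear_scale)
qed

lemma exists_dominated_support:
  "sublinear \<nu> \<Longrightarrow> \<exists>f\<in>dominated_functionals \<nu>. f x = \<nu> x"
  using sublinear_exists_linear_support[of \<nu> x] by (auto simp: dominated_functionals_def)

lemma supnorm_evaluation:
  assumes "gauge \<nu>"
  shows "supnorm (dominated_topology \<nu>) (evaluation \<nu> x) = gauge_norm \<nu> x"
proof -
  let ?D = "dominated_functionals \<nu>"
  have sub: "sublinear \<nu>" by (rule sublinear_if_gauge[OF assms])
  have "Sup ((\<lambda>f. \<bar>f x\<bar>) ` ?D) = max (\<nu> x) (\<nu> (- x))"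
  proof (rule cSup_eq_maximum)
    obtain f where f: "f \<in> ?D" "f x = \<nu> x" using exists_dominated_support[OF sub] by blast
    obtain g where g: "g \<in> ?D" "g (- x) = \<nu> (- x)" using exists_dominated_support[OF sub] by blast
    have "g x = - \<nu> (- x)"
      using g linear_neg[of g x] by (simp add: dominated_functionals_def)
    then show "max (\<nu> x) (\<nu> (- x)) \<in> (\<lambda>f. \<bar>f x\<bar>) ` ?D"
      using f g gauge_nonneg[OF assms, of x] gauge_nonneg[OF assms, of "- x"]
      by (cases "\<nu> (- x) \<le> \<nu> x") (force intro: image_eqI[of _ _ f], force intro: image_eqI[of _ _ g])
  next
    fix y
    assume "y \<in> (\<lambda>f. \<bar>f x\<bar>) ` ?D"
    then show "y \<le> max (\<nu> x) (\<nu> (- x))"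
      using dominated_functional_bounds[of _ \<nu> x] by force
  qed
  moreover have "?D \<noteq> {}" using exists_dominated_support[OF sub] by blast
  ultimately show ?thesis
    by (simp add: supnorm_def evaluation_def gauge_norm_def conj_gauge_def)
qed

lemma dCR_evaluation:
  assumes "gauge \<nu>"
  shows "dCR (dominated_topology \<nu>) (evaluation \<nu> x) = \<nu> x"
  unfolding dCR_def
proof (rule cInf_eq_minimum)
  let ?X = "dominated_topology \<nu>" and ?D = "dominated_functionals \<nu>"
  have sub: "sublinear \<nu>" by (rule sublinear_if_gauge[OF assms])
  obtain f0 where f0: "f0 \<in> ?D" "f0 x = \<nu> x" using exists_dominated_support[OF sub] by blast
  \<comment> \<open>adding the positive part of \<open>- evaluation \<nu> x\<close> cuts off everything below \<open>0\<close>\<close>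
  define p0 where "p0 = (\<lambda>f. if f \<in> ?D then max 0 (- f x) else 0)"
  have "p0 \<in> CR_pos ?X"
    unfolding CR_pos_def CR_def
  proof (intro CollectI conjI ballI allI impI)
    show "continuous_map ?X euclideanreal p0"
      by (rule continuous_map_eq[of _ _ "\<lambda>f. max 0 (- f x)"])
         (auto simp: p0_def intro!: continuous_map_real_max continuous_map_minus
           continuous_map_dominated_topology_eval)
  qed (auto simp: p0_def)
  moreover have "supnorm ?X (\<lambda>f. evaluation \<nu> x f + p0 f) = \<nu> x"
  proof -
    have "(\<lambda>f. \<bar>evaluation \<nu> x f + p0 f\<bar>) ` ?D = (\<lambda>f. max (f x) 0) ` ?D"
      by (rule image_cong) (auto simp: evaluation_def p0_def max_def)
    moreover have "Sup ((\<lambda>f. max (f x) 0) ` ?D) = \<nu> x"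
      by (rule cSup_eq_maximum)
        (use f0 gauge_nonneg[OF assms, of x] dominated_functional_bounds[of _ \<nu> x]
          in \<open>auto intro!: image_eqI[of _ _ f0]\<close>)
    ultimately show ?thesis using f0(1) by (auto simp: supnorm_def)
  qed
  ultimately show "\<nu> x \<in> (\<lambda>p. supnorm ?X (\<lambda>f. evaluation \<nu> x f + p f)) ` CR_pos ?X"
    by (intro image_eqI[of _ _ p0]) auto
next
  let ?X = "dominated_topology \<nu>" and ?D = "dominated_functionals \<nu>"
  fix y
  assume "y \<in> (\<lambda>p. supnorm ?X (\<lambda>f. evaluation \<nu> x f + p f)) ` CR_pos ?X"
  then obtain p where p: "p \<in> CR_pos ?X" and y: "y = supnorm ?X (\<lambda>f. evaluation \<nu> x f + p f)"
    by blast
  obtain f0 where f0: "f0 \<in> ?D" "f0 x = \<nu> x"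
    using exists_dominated_support[OF sublinear_if_gauge[OF assms]] by blast
  have "continuous_map ?X euclideanreal (\<lambda>f. evaluation \<nu> x f + p f)"
    using evaluation_in_CR[of \<nu> x] p by (auto simp: CR_pos_def CR_def intro: continuous_map_add)
  then have "\<bar>evaluation \<nu> x f0 + p f0\<bar> \<le> y"
    unfolding y using f0(1) by (intro abs_le_supnorm compact_space_dominated_topology) auto
  moreover have "0 \<le> p f0" using p f0(1) by (simp add: CR_pos_def)
  ultimately show "\<nu> x \<le> y" using f0 by (simp add: evaluation_def)
qed

lemma evaluation_in_CR_pos_iff:
  assumes "gauge \<nu>"
  shows "evaluation \<nu> x \<in> CR_pos (dominated_topology \<nu>) \<longleftrightarrow> x \<in> gauge_cone \<nu>"
proof
  assume "evaluation \<nu> x \<in> CR_pos (dominated_topology \<nu>)"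
  then have pos: "0 \<le> f x" if "f \<in> dominated_functionals \<nu>" for f
    using that by (auto simp: CR_pos_def evaluation_def)
  obtain g where "g \<in> dominated_functionals \<nu>" "g (- x) = \<nu> (- x)"
    using exists_dominated_support[OF sublinear_if_gauge[OF assms]] by blast
  then have "\<nu> (- x) \<le> 0"
    using pos linear_neg[of g x] by (force simp: dominated_functionals_def)
  with gauge_nonneg[OF assms, of "- x"] show "x \<in> gauge_cone \<nu>"
    by (simp add: gauge_cone_def conj_gauge_def)
next
  assume "x \<in> gauge_cone \<nu>"
  then have "0 \<le> f x" if "f \<in> dominated_functionals \<nu>" for f
    using dominated_functional_bounds(1)[OF that, of x] by (simp add: gauge_cone_def conj_gauge_def)
  then show "evaluation \<nu> x \<in> CR_pos (dominated_topology \<nu>)"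
    using evaluation_in_CR[of \<nu> x] by (simp add: CR_pos_def evaluation_def)
qed

text \<open>Properness is exactly what makes the dominated functionals separate points.\<close>

lemma inj_evaluation:
  assumes "proper_gauge \<nu>"
  shows "inj (evaluation \<nu>)"
proof (rule injI)
  fix x y
  assume eq: "evaluation \<nu> x = evaluation \<nu> y"
  have same: "f x = f y" if "f \<in> dominated_functionals \<nu>" for f
    using fun_cong[OF eq, of f] that by (simp add: evaluation_def)
  have sub: "sublinear \<nu>" using assms by (simp add: proper_gauge_def sublinear_if_gauge)
  have "\<nu> z = 0" if "z = x - y \<or> z = y - x" for z
  proof -
    obtain f where f: "f \<in> dominated_functionals \<nu>" "f z = \<nu> z"
      using exists_dominated_support[OF sub] by blast
    then have "linear f" by (simp add: dominated_functionals_def)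
    with f same[OF f(1)] that show ?thesis by (auto simp: linear_diff)
  qed
  then have "\<nu> (x - y) = 0" and "conj_gauge \<nu> (x - y) = 0" by (simp_all add: conj_gauge_def)
  with assms show "x = y" unfolding proper_gauge_def by (metis right_minus_eq)
qed

theorem theorem2p13:
  fixes \<nu> :: "'v::real_vector \<Rightarrow> real"
  assumes "proper_gauge \<nu>"
  shows "\<exists>(X :: ('v \<Rightarrow> real) topology) (\<phi> :: 'v \<Rightarrow> ('v \<Rightarrow> real) \<Rightarrow> real).
           compact_space X \<and> Hausdorff_space X \<and> linear_into_CR X \<phi>
         \<and> (\<forall>x. \<nu> x = dCR X (\<phi> x))
         \<and> (\<forall>x. gauge_norm \<nu> x = supnorm X (\<phi> x))
         \<and> inj \<phi>
         \<and> (\<forall>x. \<phi> x \<in> CR_pos X \<longleftrightarrow> x \<in> gauge_cone \<nu>)"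
proof (intro exI conjI allI)
  have "gauge \<nu>" using assms by (simp add: proper_gauge_def)
  let ?X = "dominated_topology \<nu>" and ?\<phi> = "evaluation \<nu>"
  show "compact_space ?X" by (rule compact_space_dominated_topology)
  show "Hausdorff_space ?X" by (rule Hausdorff_space_dominated_topology)
  show "linear_into_CR ?X ?\<phi>" by (rule linear_into_CR_evaluation)
  show "\<nu> x = dCR ?X (?\<phi> x)" for x using dCR_evaluation[OF \<open>gauge \<nu>\<close>] by simp
  show "gauge_norm \<nu> x = supnorm ?X (?\<phi> x)" for x using supnorm_evaluation[OF \<open>gauge \<nu>\<close>] by simp
  show "inj ?\<phi>" by (rule inj_evaluation[OF assms])
  show "?\<phi> x \<in> CR_pos ?X \<longleftrightarrow> x \<in> gauge_cone \<nu>" for x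
    by (rule evaluation_in_CR_pos_iff[OF \<open>gauge \<nu>\<close>])
qed

end
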